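(* Under the standing assumptions, for fixed $\lambda>0$ and $\eta_1=\frac1d+\frac{\lambda}{n^{1-(k-1)\alpha}\ln d}$, $$\Phi(n\eta_1)=o\!\left(\exp\left\{-\left(\frac{\lambda^2}{2}+o(1)\right)\frac{n^{(2k-1)\alpha-1}}{(\ln d)^2}\right\}\right)\quad(n\to\infty),$$ where $n\eta_1$ is treated as an integer (equivalently, $\Phi$ is evaluated through its Gamma-function extension $\Phi_c$).
   Context: Parameters: integer $k\ge2$, constants $\alpha>0$, $r>0$, $0<p<1$; $d=n^{\alpha}$ (treated as an integer), $m=n\ln d$, $\tau=\frac1{1-p}$, $r_{cr}=\frac1{\ln\tau}$. Standing assumptions: $(2k-1)\alpha>1$, $k\alpha\le1$, $k\ge\frac{\tau\ln\tau}{\tau-1}$, and $r<r_{cr}$. Notation: $f(s)=1+\frac{p}{1-p}\cdot\frac{s^k-d^{-k}}{1-d^{-k}}$ for $s\in[0,1]$; $B(S)=\binom{n}{S}\left(\frac1d\right)^{S}\left(1-\frac1d\right)^{n-S}$; $W(S)=f(S/n)^{rm}$; $\Phi(S)=B(S)W(S)$; its real extension is $\Phi_c(z)=\frac{\Gamma(n+1)}{\Gamma(z+1)\Gamma(n-z+1)}\left(\frac1d\right)^{z}\left(1-\frac1d\right)^{n-z}f(z/n)^{rm}$ for $z\in[0,n]$. *)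

theory Defs
  imports "HOL-Analysis.Analysis" "HOL-Library.Landau_Symbols"
begin

text \<open>d = n^alpha (kept real; the paper treats it as an integer, rounding ignored).\<close>
definition dpar :: "real \<Rightarrow> nat \<Rightarrow> real" where
  "dpar \<alpha> n = real n powr \<alpha>"

definition mpar :: "real \<Rightarrow> nat \<Rightarrow> real" where
  "mpar \<alpha> n = real n * ln (dpar \<alpha> n)"

definition tau :: "real \<Rightarrow> real" where
  "tau p = 1 / (1 - p)"

definition fpar :: "real \<Rightarrow> nat \<Rightarrow> real \<Rightarrow> real \<Rightarrow> real" where
  "fpar p k d s = 1 + p / (1 - p) * (s ^ k - inverse (d ^ k)) / (1 - inverse (d ^ k))"

text \<open>Real (Gamma-function) extension Phi_c of Phi(S) = B(S) W(S).\<close>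
definition Phi_c :: "real \<Rightarrow> real \<Rightarrow> real \<Rightarrow> nat \<Rightarrow> nat \<Rightarrow> real \<Rightarrow> real" where
  "Phi_c \<alpha> r p k n z =
     Gamma (real n + 1) / (Gamma (z + 1) * Gamma (real n - z + 1))
     * (1 / dpar \<alpha> n) powr z * (1 - 1 / dpar \<alpha> n) powr (real n - z)
     * fpar p k (dpar \<alpha> n) (z / real n) powr (r * mpar \<alpha> n)"

end

theory Submission
  imports Defs "HOL-Real_Asymp.Real_Asymp" "HOL-Probability.Probability_Mass_Function"
begin

(* Write Phi_c as B_c * f^(r m), where B_c is the Gamma-function extension of the
   Binomial(n, 1/d) density. Log-convexity of Gamma compares B_c at a real point z with the
   binomial probability at floor z, so B_c is at most 6 at its own mean; moving the parameter
   from z/n to 1/d costs the Chernoff factor exp (- t^2 / (mu (2 + t/mu))) with mu = n/d and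
   t = n eta_1 - mu. At eta_1 this exponent is lam^2 n^((2k-1) alpha - 1) / (ln d)^2 / (2 + u)
   with u = lam n^(k alpha - 1) / ln d -> 0, while ln f <= f - 1 bounds f^(r m) by a constant.
   The constant and the correction 1/(2 + u) are absorbed into epsilon. *)

lemma ln_Gamma_plus1_real:
  fixes x :: real
  assumes "x > 0"
  shows "ln (Gamma (x + 1)) = ln (Gamma x) + ln x"
proof -
  have "x \<notin> \<int>\<^sub>\<le>\<^sub>0" using assms by (auto elim!: nonpos_Ints_cases)
  then have "Gamma (x + 1) = x * Gamma x" by (rule Gamma_plus1)
  moreover have "Gamma x > 0" using assms by simp
  ultimately show ?thesis using assms by (simp add: ln_mult dual_order.strict_implies_not_eq)
qed

lemma ln_Gamma_add_ge:
  fixes x s :: real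
  assumes "x > 0" "s \<ge> 0"
  shows "ln (Gamma (x + 1)) + s * ln x \<le> ln (Gamma (x + 1 + s))"
proof (cases "s = 0")
  case False
  let ?g = "ln \<circ> Gamma :: real \<Rightarrow> real"
  have "(?g x - ?g (x + 1)) / (x - (x + 1)) \<le> (?g (x + 1) - ?g (x + 1 + s)) / ((x + 1) - (x + 1 + s))"
    using convex_on_slope_le[OF log_convex_Gamma_real, of x "x + 1 + s" "x + 1"] assms False
    by (auto intro: order_trans)
  also have "(?g x - ?g (x + 1)) / (x - (x + 1)) = ln x"
    using assms by (simp add: ln_Gamma_plus1_real)
  also have "(?g (x + 1) - ?g (x + 1 + s)) / ((x + 1) - (x + 1 + s))
      = (ln (Gamma (x + 1 + s)) - ln (Gamma (x + 1))) / s"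
    using False by (simp add: field_simps)
  finally show ?thesis using assms False by (simp add: field_simps)
qed simp

lemma ln_Gamma_add_le:
  fixes x s :: real
  assumes "x > 0" "s \<ge> 0"
  shows "ln (Gamma (x + s)) \<le> ln (Gamma x) + s * ln (x + s)"
proof (cases "s = 0")
  case False
  let ?g = "ln \<circ> Gamma :: real \<Rightarrow> real"
  have "(?g x - ?g (x + s)) / (x - (x + s)) \<le> (?g (x + s) - ?g (x + s + 1)) / ((x + s) - (x + s + 1))"
    using convex_on_slope_le[OF log_convex_Gamma_real, of x "x + s + 1" "x + s"] assms False
    by (auto intro: order_trans)
  also have "(?g (x + s) - ?g (x + s + 1)) / ((x + s) - (x + s + 1)) = ln (x + s)"
    using assms False by (simp add: ln_Gamma_plus1_real)
  also have "(?g x - ?g (x + s)) / (x - (x + s)) = (ln (Gamma (x + s)) - ln (Gamma x)) / s"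
    using False by (simp add: field_simps)
  finally show ?thesis using assms False by (simp add: field_simps)
qed simp

definition binomial_density :: "nat \<Rightarrow> real \<Rightarrow> real \<Rightarrow> real" where
  "binomial_density n a z = Gamma (real n + 1) / (Gamma (z + 1) * Gamma (real n - z + 1))
     * a powr z * (1 - a) powr (real n - z)"

lemma binomial_density_pos:
  assumes "0 < a" "a < 1" "0 \<le> z" "z \<le> real n"
  shows "binomial_density n a z > 0"
  using assms by (simp add: binomial_density_def)

lemma ln_binomial_density:
  assumes "0 < a" "a < 1" "0 \<le> z" "z \<le> real n"
  shows "ln (binomial_density n a z) = ln (Gamma (real n + 1)) - ln (Gamma (z + 1))
     - ln (Gamma (real n - z + 1)) + z * ln a + (real n - z) * ln (1 - a)"
proof -
  have "Gamma (real n + 1) > 0" "Gamma (z + 1) > 0" "Gamma (real n - z + 1) > 0"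
    using assms by simp_all
  then show ?thesis using assms
    by (simp add: binomial_density_def ln_mult ln_div ln_powr dual_order.strict_implies_not_eq)
qed

lemma binomial_density_of_nat:
  assumes "0 < a" "a < 1" "j \<le> n"
  shows "binomial_density n a (real j) = pmf (binomial_pmf n a) j"
proof -
  have "Gamma (real n + 1) / (Gamma (real j + 1) * Gamma (real n - real j + 1)) = real (n choose j)"
    using assms Gamma_fact[of n, where 'a = real] Gamma_fact[of j, where 'a = real]
      Gamma_fact[of "n - j", where 'a = real]
    by (simp add: binomial_fact add.commute of_nat_diff)
  moreover have "a powr real j * (1 - a) powr (real n - real j) = a ^ j * (1 - a) ^ (n - j)"
    using assms powr_realpow[of a j] powr_realpow[of "1 - a" "n - j"] by (simp add: of_nat_diff)
  ultimately show ?thesis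
    using assms by (simp add: binomial_density_def pmf_binomial mult.assoc)
qed

lemma binomial_density_self_le:
  fixes n :: nat and z :: real
  assumes z2: "2 \<le> z" and zn: "z \<le> real n - 1"
  shows "binomial_density n (z / real n) z \<le> 6"
proof -
  define j where "j = nat \<lfloor>z\<rfloor>"
  define s where "s = z - real j"
  define a where "a = z / real n"
  have jz: "real j \<le> z" "z < real j + 1" using z2 unfolding j_def by linarith+
  have j1: "real j \<ge> 1" and jn: "j < n" using jz z2 zn by linarith+
  have s01: "0 \<le> s" "s < 1" using jz unfolding s_def by auto
  have a01: "0 < a" "a < 1" using z2 zn unfolding a_def by (auto simp: field_simps)
  have Gz: "ln (Gamma (real j + 1)) + s * ln (real j) \<le> ln (Gamma (z + 1))"
    using ln_Gamma_add_ge[of "real j" s] j1 s01 unfolding s_def by (simp add: algebra_simps)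
  have Gnz: "ln (Gamma (real n - real j + 1)) \<le> ln (Gamma (real n - z + 1)) + s * ln (real n - real j + 1)"
    using ln_Gamma_add_le[of "real n - z + 1" s] zn s01 by (simp add: s_def algebra_simps)
  \<comment> \<open>moving from the integer point j to z costs at most the factor X powr s\<close>
  define X where "X = (real n - real j + 1) / real j * (a / (1 - a))"
  have X: "0 < X" "X \<le> 6"
  proof -
    have "X = (real n - real j + 1) * z / (real j * (real n - z))"
      unfolding X_def a_def using zn z2 j1 by (simp add: field_simps)
    moreover have "0 < (real n - real j + 1) * z" "0 < real j * (real n - z)"
      using jz j1 zn z2 by simp_all
    moreover have "(real n - real j + 1) * z \<le> 6 * (real j * (real n - z))"
      using mult_mono[of "real n - real j + 1" "3 * (real n - z)" z "2 * real j"] jz j1 zn z2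
      by (simp add: algebra_simps)
    ultimately show "0 < X" "X \<le> 6" by (simp_all add: divide_le_eq)
  qed
  have "s * ln X \<le> ln 6"
  proof (cases "X \<le> 1")
    case True
    then have "ln X \<le> 0" using X by simp
    then have "s * ln X \<le> 0" using s01 by (simp add: mult_nonneg_nonpos)
    moreover have "0 \<le> ln (6::real)" by simp
    ultimately show ?thesis by linarith
  next
    case False
    then have "s * ln X \<le> ln X" using s01 by (simp add: mult_left_le_one_le)
    also have "\<dots> \<le> ln 6" using X by simp
    finally show ?thesis .
  qed
  moreover have "ln X = ln (real n - real j + 1) - ln (real j) + ln a - ln (1 - a)"
    unfolding X_def using jn j1 a01 by (simp add: ln_mult ln_div)
  moreover have "ln (binomial_density n a (real j)) \<le> 0"
  proof -
    have "binomial_density n a (real j) \<le> 1"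
      using binomial_density_of_nat[of a j n] pmf_le_1[of "binomial_pmf n a" j] a01 jn by simp
    then show ?thesis using binomial_density_pos[of a "real j" n] a01 jn by simp
  qed
  ultimately have "ln (binomial_density n a z) \<le> ln 6"
    using Gz Gnz a01 jn jz zn z2 ln_binomial_density[of a "real j" n] ln_binomial_density[of a z n]
    by (simp add: s_def algebra_simps)
  then show ?thesis
    using binomial_density_pos[of a z n] a01 z2 zn unfolding a_def by simp
qed

lemma binomial_density_change_param:
  assumes "0 < a" "a < 1" "0 < b" "b < 1"
  shows "binomial_density n a z
    = binomial_density n b z * (a / b) powr z * ((1 - a) / (1 - b)) powr (real n - z)"
  using assms by (simp add: binomial_density_def powr_divide)

lemma ln_add_one_ge:
  fixes u :: real
  assumes "u \<ge> 0"
  shows "2 * u / (2 + u) \<le> ln (1 + u)"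
proof -
  let ?h = "\<lambda>u::real. ln (1 + u) - 2 * u / (2 + u)"
  have "?h 0 \<le> ?h u"
  proof (rule DERIV_nonneg_imp_nondecreasing[OF assms])
    fix x :: real
    assume x: "0 \<le> x" "x \<le> u"
    have "(?h has_real_derivative (1 / (1 + x) - 4 / (2 + x)^2)) (at x)"
      using x by (auto intro!: derivative_eq_intros simp: power2_eq_square)
    moreover have "4 / (2 + x)^2 \<le> 1 / (1 + x)"
      using x by (simp add: divide_simps power2_eq_square algebra_simps)
    ultimately show "\<exists>y. (?h has_real_derivative y) (at x) \<and> 0 \<le> y" by force
  qed
  then show ?thesis by simp
qed

lemma chernoff_factor_le:
  fixes \<mu> t n :: real
  assumes "\<mu> > 0" "t \<ge> 0" "\<mu> + t < n"
  shows "(\<mu> / (\<mu> + t)) powr (\<mu> + t) * ((n - \<mu>) / (n - (\<mu> + t))) powr (n - (\<mu> + t))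
         \<le> exp (- (t^2 / \<mu>) / (2 + t / \<mu>))"
proof -
  define u where "u = t / \<mu>"
  have u: "u \<ge> 0" "t = \<mu> * u" unfolding u_def using assms by auto
  have "ln ((n - \<mu>) / (n - (\<mu> + t))) \<le> (n - \<mu>) / (n - (\<mu> + t)) - 1"
    using assms by (intro ln_le_minus_one) auto
  then have A: "(n - (\<mu> + t)) * ln ((n - \<mu>) / (n - (\<mu> + t))) \<le> t"
    using assms by (simp add: field_simps)
  have "\<mu> + t = \<mu> * (1 + u)" using u by (simp add: algebra_simps)
  then have "ln (\<mu> / (\<mu> + t)) = - ln (1 + u)"
    using assms(1) u(1) by (simp add: ln_div ln_mult)
  moreover have "(\<mu> + t) * (2 * u / (2 + u)) \<le> (\<mu> + t) * ln (1 + u)"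
    using ln_add_one_ge[OF u(1)] assms by (intro mult_left_mono) simp_all
  ultimately have B: "(\<mu> + t) * ln (\<mu> / (\<mu> + t)) \<le> - ((\<mu> + t) * (2 * u / (2 + u)))"
    by simp
  have C: "- ((\<mu> + t) * (2 * u / (2 + u))) + t = - (t^2 / \<mu>) / (2 + t / \<mu>)"
  proof -
    have "t^2 / \<mu> = \<mu> * u^2" "t / \<mu> = u" "2 + u > 0"
      using assms(1) u by (simp_all add: power2_eq_square)
    then show ?thesis unfolding u(2) by (simp add: field_simps power2_eq_square)
  qed
  have "(\<mu> / (\<mu> + t)) powr (\<mu> + t) * ((n - \<mu>) / (n - (\<mu> + t))) powr (n - (\<mu> + t))
      = exp ((\<mu> + t) * ln (\<mu> / (\<mu> + t)) + (n - (\<mu> + t)) * ln ((n - \<mu>) / (n - (\<mu> + t))))"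
    using assms by (simp add: powr_def exp_add mult.commute)
  also have "\<dots> \<le> exp (- (t^2 / \<mu>) / (2 + t / \<mu>))"
    using A B C by simp
  finally show ?thesis .
qed

lemma binomial_density_deviation_le:
  fixes n :: nat and \<mu> t :: real
  assumes "2 \<le> \<mu>" "0 \<le> t" "\<mu> + t \<le> real n - 1"
  shows "binomial_density n (\<mu> / real n) (\<mu> + t) \<le> 6 * exp (- (t^2 / \<mu>) / (2 + t / \<mu>))"
proof -
  have n: "real n > 0" "real n - (\<mu> + t) > 0" using assms by linarith+
  define a b where "a = \<mu> / real n" and "b = (\<mu> + t) / real n"
  have ab: "0 < a" "a < 1" "0 < b" "b < 1"
    using n assms by (simp_all add: a_def b_def field_simps)
  have "1 - a = (real n - \<mu>) / real n" "1 - b = (real n - (\<mu> + t)) / real n"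
    using n by (simp_all add: a_def b_def field_simps)
  then have "a / b = \<mu> / (\<mu> + t)" "(1 - a) / (1 - b) = (real n - \<mu>) / (real n - (\<mu> + t))"
    using n by (simp_all add: a_def b_def)
  then have "binomial_density n a (\<mu> + t) = binomial_density n b (\<mu> + t)
      * ((\<mu> / (\<mu> + t)) powr (\<mu> + t) * ((real n - \<mu>) / (real n - (\<mu> + t))) powr (real n - (\<mu> + t)))"
    using binomial_density_change_param[OF ab, of n "\<mu> + t"] by (simp add: mult.assoc)
  also have "\<dots> \<le> 6 * exp (- (t^2 / \<mu>) / (2 + t / \<mu>))"
    using binomial_density_self_le[of "\<mu> + t" n] chernoff_factor_le[of \<mu> t "real n"]
      binomial_density_pos[of b "\<mu> + t" n] ab n assms
    by (intro mult_mono) (simp_all add: b_def)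
  finally show ?thesis by (simp add: a_def)
qed

lemma one_add_power_sub_one_le:
  fixes u :: real
  assumes "0 \<le> u" "u \<le> 1"
  shows "(1 + u) ^ k - 1 \<le> real k * 2 ^ k * u"
proof -
  have "(1 + u) ^ k - 1 ^ k = ((1 + u) - 1) * (\<Sum>i<k. 1 ^ (k - Suc i) * (1 + u) ^ i)"
    by (rule power_diff_sumr2)
  also have "\<dots> = u * (\<Sum>i<k. (1 + u) ^ i)" by simp
  also have "\<dots> \<le> u * (\<Sum>i<k. 2 ^ k)"
  proof (intro mult_left_mono sum_mono)
    fix i
    assume "i \<in> {..<k}"
    then have "(1 + u) ^ i \<le> 2 ^ i" and "(2::real) ^ i \<le> 2 ^ k"
      using assms by (auto intro: power_mono power_increasing)
    then show "(1 + u) ^ i \<le> 2 ^ k" by linarith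
  qed (use assms in auto)
  finally show ?thesis by (simp add: algebra_simps)
qed

lemma fpar_powr_le:
  fixes p q u M :: real and k :: nat
  assumes "0 < p" "p < 1" "0 < q" "q ^ k \<le> 1/2" "0 \<le> u" "u \<le> 1" "M \<ge> 0"
  shows "fpar p k (1 / q) (q * (1 + u)) > 0"
    and "fpar p k (1 / q) (q * (1 + u)) powr M
           \<le> exp (2 * p / (1 - p) * real k * 2 ^ k * (M * q ^ k * u))"
proof -
  define c where "c = p / (1 - p) * q ^ k * (1 / (1 - q ^ k))"
  have pq: "0 < p / (1 - p) * q ^ k" "0 < 1 - q ^ k" "1 / (1 - q ^ k) \<le> 2"
    using assms by (auto simp: field_simps)
  have "0 \<le> c" unfolding c_def using assms pq(2) by simp
  moreover have "c \<le> p / (1 - p) * q ^ k * 2"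
    unfolding c_def by (rule mult_left_mono[OF pq(3) less_imp_le[OF pq(1)]])
  ultimately have c: "0 \<le> c" "c \<le> p / (1 - p) * q ^ k * 2" by simp_all
  have "1 - p \<noteq> 0" "1 - q ^ k \<noteq> 0" using assms by auto
  then have f: "fpar p k (1 / q) (q * (1 + u)) = 1 + c * ((1 + u) ^ k - 1)"
    by (simp add: fpar_def power_one_over power_mult_distrib) (simp add: c_def field_simps)
  have e: "0 \<le> (1 + u) ^ k - 1" "(1 + u) ^ k - 1 \<le> real k * 2 ^ k * u"
    using assms one_add_power_sub_one_le[of u k] by auto
  show pos: "fpar p k (1 / q) (q * (1 + u)) > 0"
    unfolding f using c e by (simp add: add_pos_nonneg)
  have "ln (fpar p k (1 / q) (q * (1 + u))) \<le> c * ((1 + u) ^ k - 1)"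
    using ln_le_minus_one[OF pos] unfolding f by simp
  also have "\<dots> \<le> p / (1 - p) * q ^ k * 2 * (real k * 2 ^ k * u)"
    using c e by (intro mult_mono) auto
  finally have "M * ln (fpar p k (1 / q) (q * (1 + u)))
      \<le> 2 * p / (1 - p) * real k * 2 ^ k * (M * q ^ k * u)"
    using assms(7) mult_left_mono by (fastforce simp: algebra_simps)
  then show "fpar p k (1 / q) (q * (1 + u)) powr M
      \<le> exp (2 * p / (1 - p) * real k * 2 ^ k * (M * q ^ k * u))"
    using pos by (simp add: powr_def mult.commute)
qed

lemma Phi_c_eq_binomial_density:
  "Phi_c \<alpha> r p k n z = binomial_density n (1 / dpar \<alpha> n) z
     * fpar p k (dpar \<alpha> n) (z / real n) powr (r * mpar \<alpha> n)"
  by (simp add: Phi_c_def binomial_density_def)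

lemma Phi_c_le:
  fixes k n :: nat and \<alpha> r p x :: real
  defines "d \<equiv> dpar \<alpha> n"
  assumes "k \<ge> 1" "r > 0" "0 < p" "p < 1" "2 \<le> d" "0 \<le> x" "x * d \<le> 1"
    and "2 \<le> real n / d" "2 * (real n / d) \<le> real n - 1"
  shows "0 < Phi_c \<alpha> r p k n (real n * (1 / d + x))"
    and "Phi_c \<alpha> r p k n (real n * (1 / d + x))
      \<le> 6 * exp (- ((real n * x)^2 / (real n / d)) / (2 + x * d))
        * exp (2 * p / (1 - p) * real k * 2 ^ k * (r * mpar \<alpha> n * (1 / d) ^ k * (x * d)))"
proof -
  define \<mu> where "\<mu> = real n / d"
  define z where "z = real n * (1 / d + x)"
  have d: "d > 0" using assms by simp
  have n: "real n > 0" using assms(9) by (cases n) auto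
  have \<mu>: "1 / d = \<mu> / real n" "real n * x / \<mu> = x * d" "z = \<mu> + real n * x"
    using n d by (simp_all add: \<mu>_def z_def distrib_left)
  have zq: "z / real n = 1 / d * (1 + x * d)"
    using n d by (simp add: z_def field_simps)
  have "real n * x = \<mu> * (x * d)" using d by (simp add: \<mu>_def)
  also have "\<dots> \<le> \<mu>" using assms(8) d n mult_left_mono[of "x * d" 1 \<mu>] by (simp add: \<mu>_def)
  finally have t: "real n * x \<le> \<mu>" .
  have hyp: "2 \<le> \<mu>" "0 \<le> real n * x" "\<mu> + real n * x \<le> real n - 1"
    using assms(7,9,10) t n unfolding \<mu>_def by simp_all
  have B: "binomial_density n (1 / d) z \<le> 6 * exp (- ((real n * x)^2 / \<mu>) / (2 + x * d))"
    using binomial_density_deviation_le[OF hyp] unfolding \<mu>(1)[symmetric] \<mu>(2) \<mu>(3)[symmetric] .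
  have bpos: "binomial_density n (1 / d) z > 0"
    using binomial_density_pos[of "1 / d" z n] hyp \<mu>(3) assms(6) by simp
  have "(1 / d) ^ k \<le> 1 / d" using power_decreasing[of 1 k "1 / d"] assms(2,6) by simp
  moreover have "1 / d \<le> 1 / 2" using assms(6) by (simp add: field_simps)
  ultimately have q: "(1 / d) ^ k \<le> 1 / 2" by linarith
  have M: "r * mpar \<alpha> n \<ge> 0" using assms(3,6) n by (simp add: mpar_def d_def[symmetric])
  note F = fpar_powr_le[of p "1 / d" k "x * d" "r * mpar \<alpha> n", OF assms(4,5) _ q _ assms(8) M]
  have Phi: "Phi_c \<alpha> r p k n z = binomial_density n (1 / d) z * fpar p k d (1 / d * (1 + x * d)) powr (r * mpar \<alpha> n)"
    unfolding Phi_c_eq_binomial_density d_def[symmetric] zq ..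
  show "0 < Phi_c \<alpha> r p k n (real n * (1 / d + x))"
    using bpos F d assms(7) unfolding Phi z_def[symmetric] by simp
  show "Phi_c \<alpha> r p k n (real n * (1 / d + x))
      \<le> 6 * exp (- ((real n * x)^2 / (real n / d)) / (2 + x * d))
        * exp (2 * p / (1 - p) * real k * 2 ^ k * (r * mpar \<alpha> n * (1 / d) ^ k * (x * d)))"
    unfolding z_def[symmetric] Phi \<mu>_def[symmetric]
    using B bpos F d assms(7) by (intro mult_mono) (simp_all add: mult.assoc)
qed

lemma smallo_exp_of_le:
  fixes f G u :: "nat \<Rightarrow> real" and a K :: real
  assumes u: "u \<longlonglongrightarrow> 0" and G: "filterlim G at_top sequentially"
    and f: "eventually (\<lambda>n. \<bar>f n\<bar> \<le> K * exp (- a * G n / (2 + u n))) sequentially"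
  shows "\<exists>\<epsilon>. \<epsilon> \<longlonglongrightarrow> 0 \<and> f \<in> o(\<lambda>n. exp (- (a / 2 + \<epsilon> n) * G n))"
proof -
  define \<epsilon> where "\<epsilon> n = - (a * u n / (2 * (2 + u n))) - 1 / sqrt (G n)" for n
  define E where "E n = exp (- (a / 2 + \<epsilon> n) * G n)" for n
  have sqrtG: "filterlim (\<lambda>n. sqrt (G n)) at_top sequentially"
    using filterlim_compose[OF sqrt_at_top G] .
  have "\<epsilon> \<longlonglongrightarrow> - (a * 0 / (2 * (2 + 0))) - 0"
    unfolding \<epsilon>_def
    by (intro tendsto_intros u tendsto_divide_0[OF tendsto_const] filterlim_at_top_imp_at_infinity sqrtG)
      simp
  then have \<epsilon>: "\<epsilon> \<longlonglongrightarrow> 0" by simp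
  have "eventually (\<lambda>n. 0 < G n) sequentially" "eventually (\<lambda>n. -1 < u n) sequentially"
    using G[unfolded filterlim_at_top_dense] order_tendstoD(1)[OF u, of "-1"] by auto
  with f have bound: "eventually (\<lambda>n. \<bar>f n / E n\<bar> \<le> K * exp (- sqrt (G n))) sequentially"
  proof eventually_elim
    case (elim n)
    \<comment> \<open>the term 1 / sqrt G in \<epsilon> gains the factor exp (- sqrt G) over the bound\<close>
    have "a / 2 - a * u n / (2 * (2 + u n)) = a / (2 + u n)" "G n * (1 / sqrt (G n)) = sqrt (G n)"
      using elim by (simp_all add: field_simps real_div_sqrt)
    moreover have "- (a / 2 + \<epsilon> n) * G n
        = - ((a / 2 - a * u n / (2 * (2 + u n))) * G n) + G n * (1 / sqrt (G n))"
    proof -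
      have "- (a / 2 + (- A - B)) * g = - ((a / 2 - A) * g) + g * B" for A B g :: real
        by (simp add: algebra_simps)
      then show ?thesis unfolding \<epsilon>_def .
    qed
    ultimately have "- (a / 2 + \<epsilon> n) * G n = - a * G n / (2 + u n) + sqrt (G n)"
      by simp
    then have "E n = exp (- a * G n / (2 + u n)) * exp (sqrt (G n))"
      unfolding E_def exp_add[symmetric] by (rule arg_cong)
    then have "\<bar>f n / E n\<bar> = \<bar>f n\<bar> / (exp (- a * G n / (2 + u n)) * exp (sqrt (G n)))"
      by (simp add: abs_mult)
    also have "\<dots> \<le> K * exp (- a * G n / (2 + u n)) / (exp (- a * G n / (2 + u n)) * exp (sqrt (G n)))"
      using elim by (intro divide_right_mono) simp_all
    also have "\<dots> = K * exp (- sqrt (G n))"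
      by (simp add: exp_minus field_simps)
    finally show ?case .
  qed
  have "(\<lambda>n. K * exp (- sqrt (G n))) \<longlonglongrightarrow> K * 0"
    using filterlim_compose[OF exp_at_bot sqrtG[unfolded filterlim_uminus_at_top]]
    by (intro tendsto_intros) (simp add: o_def)
  then have "(\<lambda>n. \<bar>f n / E n\<bar>) \<longlonglongrightarrow> 0"
    by (intro tendsto_sandwich[OF _ bound tendsto_const]) simp_all
  then have "(\<lambda>n. f n / E n) \<longlonglongrightarrow> 0"
    by (rule tendsto_rabs_zero_cancel)
  then have "f \<in> o(E)" by (rule smalloI_tendsto) (simp add: E_def)
  with \<epsilon> show ?thesis unfolding E_def by blast
qed

lemma powr_div_ln_powr_tendsto_0:
  fixes \<alpha> \<gamma> :: real
  assumes "\<alpha> > 0" "\<gamma> \<le> 0"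
  shows "(\<lambda>n::nat. real n powr \<gamma> / ln (real n powr \<alpha>)) \<longlonglongrightarrow> 0"
proof (rule tendsto_sandwich[of "\<lambda>_. 0" _ _ "\<lambda>n. 1 / ln (real n powr \<alpha>)"])
  have pos: "eventually (\<lambda>n::nat. 0 < ln (real n powr \<alpha>)) sequentially"
    using assms(1) by real_asymp
  then show "eventually (\<lambda>n. 0 \<le> real n powr \<gamma> / ln (real n powr \<alpha>)) sequentially"
    by eventually_elim simp
  have le1: "real n powr \<gamma> \<le> 1" if "n \<ge> 1" for n :: nat
    using powr_mono[of \<gamma> 0 "real n"] assms(2) that by simp
  show "eventually (\<lambda>n. real n powr \<gamma> / ln (real n powr \<alpha>) \<le> 1 / ln (real n powr \<alpha>)) sequentially"
    using pos eventually_ge_at_top[of 1]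
    by eventually_elim (simp add: divide_right_mono le1)
  show "(\<lambda>n. 1 / ln (real n powr \<alpha>)) \<longlonglongrightarrow> 0"
    using assms(1) by real_asymp
qed simp

lemma eta1_scaling:
  fixes k n :: nat and \<alpha> lam :: real
  defines "d \<equiv> dpar \<alpha> n"
    and "x \<equiv> lam / (real n powr (1 - (real k - 1) * \<alpha>) * ln (dpar \<alpha> n))"
  assumes "n > 0" "ln d \<noteq> 0"
  shows "x * d = lam * real n powr (real k * \<alpha> - 1) / ln d"
    and "(real n * x)^2 / (real n / d) = lam^2 * (real n powr ((2 * real k - 1) * \<alpha> - 1) / (ln d)^2)"
    and "mpar \<alpha> n * (1 / d) ^ k * (x * d) = lam"
proof -
  define N c L where "N = real n" and "c = 1 - (real k - 1) * \<alpha>" and "L = ln d"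
  have N: "N > 0" and L: "L \<noteq> 0" using assms by (simp_all add: N_def L_def)
  have x: "x = lam / (N powr c * L)" by (simp add: x_def N_def c_def L_def d_def)
  have d: "d = N powr \<alpha>" "d ^ k = N powr (real k * \<alpha>)"
    using N by (simp_all add: d_def dpar_def N_def powr_power)
  have "N powr \<alpha> / N powr c = N powr (real k * \<alpha> - 1)"
    using N by (simp add: powr_diff[symmetric] c_def algebra_simps)
  moreover have "x * d = lam * (N powr \<alpha> / N powr c) / L"
    unfolding x d(1) by simp
  ultimately have xd: "x * d = lam * N powr (real k * \<alpha> - 1) / L" by simp
  then show "x * d = lam * real n powr (real k * \<alpha> - 1) / ln d" by (simp add: N_def L_def)
  have "N * N powr \<alpha> = N powr (1 + \<alpha>)" "(N powr c)^2 = N powr (2 * c)"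
    using N by (simp_all add: powr_add powr_power)
  then have "N * N powr \<alpha> / (N powr c)^2 = N powr ((2 * real k - 1) * \<alpha> - 1)"
    using N by (simp add: powr_diff[symmetric] c_def algebra_simps)
  moreover have "(N * x)^2 / (N / d) = lam^2 * (N * N powr \<alpha> / (N powr c)^2) / L^2"
    unfolding x d(1) using N L by (simp add: field_simps power2_eq_square)
  ultimately show "(real n * x)^2 / (real n / d) = lam^2 * (real n powr ((2 * real k - 1) * \<alpha> - 1) / (ln d)^2)"
    by (simp add: N_def L_def)
  have "N * N powr (real k * \<alpha> - 1) = N powr (real k * \<alpha>)"
    using N by (simp add: powr_diff)
  moreover have "mpar \<alpha> n = N * L" by (simp add: mpar_def N_def L_def d_def)
  ultimately show "mpar \<alpha> n * (1 / d) ^ k * (x * d) = lam"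
    unfolding xd power_one_over d(2) using N L by (simp add: field_simps)
qed

lemma Phi_c_eta1_le:
  fixes k n :: nat and \<alpha> r p lam :: real
  defines "d \<equiv> dpar \<alpha> n"
  assumes "k \<ge> 1" "r > 0" "0 < p" "p < 1" "lam \<ge> 0" "2 \<le> d"
    and "2 \<le> real n / d" "2 * (real n / d) \<le> real n - 1"
    and "lam * real n powr (real k * \<alpha> - 1) / ln d \<le> 1"
  shows "\<bar>Phi_c \<alpha> r p k n (real n * (1 / d + lam / (real n powr (1 - (real k - 1) * \<alpha>) * ln d)))\<bar>
    \<le> 6 * exp (2 * p / (1 - p) * real k * 2 ^ k * (r * lam))
      * exp (- (lam^2) * (real n powr ((2 * real k - 1) * \<alpha> - 1) / (ln d)^2)
             / (2 + lam * real n powr (real k * \<alpha> - 1) / ln d))"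
proof -
  define x where "x = lam / (real n powr (1 - (real k - 1) * \<alpha>) * ln d)"
  have n: "n > 0" using assms(8) by (cases n) auto
  have L: "ln d > 0" using assms(7) by simp
  then have "ln (dpar \<alpha> n) \<noteq> 0" by (simp add: d_def)
  note S = eta1_scaling[OF n this, where lam = lam and k = k, folded d_def, folded x_def]
  have "x \<ge> 0" using assms(6) L by (simp add: x_def)
  note P = Phi_c_le[where k = k and n = n and \<alpha> = \<alpha> and r = r and p = p and x = x,
    folded d_def, OF assms(2-5,7) this _ assms(8,9)]
  have "r * mpar \<alpha> n * (1 / d) ^ k * (x * d) = r * lam" using S(3) by (simp add: mult.assoc)
  then show ?thesis
    using P assms(10) unfolding x_def[symmetric] S(1) S(2) by (simp add: ac_simps)
qed

theorem lemma4p6: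
  fixes k :: nat and \<alpha> r p lam :: real
  assumes "k \<ge> 2" and "\<alpha> > 0" and "r > 0" and "0 < p" and "p < 1"
    and "(2 * real k - 1) * \<alpha> > 1" and "real k * \<alpha> \<le> 1"
    and "real k \<ge> tau p * ln (tau p) / (tau p - 1)"
    and "r < 1 / ln (tau p)"
    and "lam > 0"
  shows "\<exists>\<epsilon> :: nat \<Rightarrow> real. \<epsilon> \<longlonglongrightarrow> 0 \<and>
    (\<lambda>n. Phi_c \<alpha> r p k n
           (real n * (1 / dpar \<alpha> n
              + lam / (real n powr (1 - (real k - 1) * \<alpha>) * ln (dpar \<alpha> n)))))
    \<in> o(\<lambda>n. exp (- (lam\<^sup>2 / 2 + \<epsilon> n)
                  * real n powr ((2 * real k - 1) * \<alpha> - 1) / (ln (dpar \<alpha> n))\<^sup>2))"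
proof -
  have "2 * \<alpha> \<le> real k * \<alpha>" using assms(1,2) by simp
  then have \<alpha>: "\<alpha> < 1" using assms(7) by linarith
  define G u K where
    "G n = real n powr ((2 * real k - 1) * \<alpha> - 1) / (ln (dpar \<alpha> n))^2" and
    "u n = lam * real n powr (real k * \<alpha> - 1) / ln (dpar \<alpha> n)" and
    "K = 6 * exp (2 * p / (1 - p) * real k * 2 ^ k * (r * lam))" for n
  have "(\<lambda>n. lam * (real n powr (real k * \<alpha> - 1) / ln (real n powr \<alpha>))) \<longlonglongrightarrow> lam * 0"
    using powr_div_ln_powr_tendsto_0[of \<alpha> "real k * \<alpha> - 1"] assms(2,7) by (intro tendsto_intros) simp
  then have u: "u \<longlonglongrightarrow> 0" by (simp add: u_def[abs_def] dpar_def)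
  have G: "filterlim G at_top sequentially"
    unfolding G_def[abs_def] dpar_def using assms(2,6) by real_asymp
  have "eventually (\<lambda>n. 2 \<le> dpar \<alpha> n) sequentially"
    and "eventually (\<lambda>n. 2 \<le> real n / dpar \<alpha> n) sequentially"
    and "eventually (\<lambda>n. 2 * (real n / dpar \<alpha> n) \<le> real n - 1) sequentially"
    unfolding dpar_def using assms(2) \<alpha> by real_asymp+
  moreover have "eventually (\<lambda>n. u n \<le> 1) sequentially"
    using order_tendstoD(2)[OF u, of 1] by (auto elim: eventually_mono)
  ultimately have "eventually (\<lambda>n. \<bar>Phi_c \<alpha> r p k n
           (real n * (1 / dpar \<alpha> n + lam / (real n powr (1 - (real k - 1) * \<alpha>) * ln (dpar \<alpha> n))))\<bar>
      \<le> K * exp (- (lam\<^sup>2) * G n / (2 + u n))) sequentially"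
  proof eventually_elim
    case (elim n)
    then show ?case
      using Phi_c_eta1_le[where k = k and n = n and \<alpha> = \<alpha> and r = r and p = p and lam = lam] assms
      unfolding G_def u_def K_def by simp
  qed
  from smallo_exp_of_le[OF u G this] show ?thesis by (simp add: G_def)
qed

end
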